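(* For $n\ge2$ and all $P,Q\in\Gamma_n$, $T(P\|Q)\le \frac1{16}\Psi(P\|Q)$.
   Context: $\Gamma_n=\{P=(p_1,\dots,p_n): p_i>0,\ \sum p_i=1\}$. $T(P\|Q)=\sum_{i=1}^n\frac{p_i+q_i}{2}\ln\frac{p_i+q_i}{2\sqrt{p_iq_i}}$ (natural logarithm); $\Psi(P\|Q)=\sum_{i=1}^n\frac{(p_i-q_i)^2(p_i+q_i)}{p_iq_i}$. *)

theory Defs
  imports Complex_Main
begin

definition Gamma :: "nat \<Rightarrow> (nat \<Rightarrow> real) set" where
  "Gamma n = {p. (\<forall>i<n. p i > 0) \<and> (\<Sum>i<n. p i) = 1}"

definition T_div :: "nat \<Rightarrow> (nat \<Rightarrow> real) \<Rightarrow> (nat \<Rightarrow> real) \<Rightarrow> real" where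
  "T_div n p q = (\<Sum>i<n. (p i + q i) / 2 * ln ((p i + q i) / (2 * sqrt (p i * q i))))"

definition Psi_div :: "nat \<Rightarrow> (nat \<Rightarrow> real) \<Rightarrow> (nat \<Rightarrow> real) \<Rightarrow> real" where
  "Psi_div n p q = (\<Sum>i<n. (p i - q i)^2 * (p i + q i) / (p i * q i))"

end

theory Submission
  imports Defs
begin

text \<open>Each summand of \<open>T\<close> has the form \<open>m ln (m/g)\<close> with \<open>m\<close>, \<open>g\<close> the arithmetic and geometric
  means of \<open>p\<^sub>i\<close>, \<open>q\<^sub>i\<close>. By \<open>ln u \<le> u - 1\<close> it is at most \<open>m (m - g)/g\<close>, and \<open>(m - g)\<^sup>2 \<ge> 0\<close> gives
  \<open>(m - g)/g \<le> (m\<^sup>2 - g\<^sup>2)/(2 g\<^sup>2)\<close>, where \<open>m\<^sup>2 - g\<^sup>2 = (p\<^sub>i - q\<^sub>i)\<^sup>2/4\<close>: this is the summand of \<open>\<Psi>/16\<close>.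
  Only positivity of the entries is used.\<close>

lemma divide_minus_one_le_diff_squares:
  fixes m g :: real
  assumes "g > 0"
  shows "m / g - 1 \<le> (m\<^sup>2 - g\<^sup>2) / (2 * g\<^sup>2)"
proof -
  have "m / g - 1 = 2 * g * (m - g) / (2 * g\<^sup>2)"
    using assms by (simp add: field_simps power2_eq_square)
  also have "\<dots> \<le> (m\<^sup>2 - g\<^sup>2) / (2 * g\<^sup>2)"
    using zero_le_power2[of "m - g"]
    by (intro divide_right_mono) (simp_all add: power2_eq_square algebra_simps)
  finally show ?thesis .
qed

lemma mean_ln_mean_ratio_le:
  fixes a b :: real
  assumes "a > 0" and "b > 0"
  shows "(a + b) / 2 * ln ((a + b) / (2 * sqrt (a * b))) \<le> (a - b)\<^sup>2 * (a + b) / (a * b) / 16"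
proof -
  define m where "m = (a + b) / 2"
  define g where "g = sqrt (a * b)"
  have "g > 0" "g\<^sup>2 = a * b"
    using assms by (simp_all add: g_def)
  have "m > 0"
    using assms by (simp add: m_def)
  have "(a + b) / 2 * ln ((a + b) / (2 * sqrt (a * b))) = m * ln (m / g)"
    by (simp add: m_def g_def)
  also have "\<dots> \<le> m * (m / g - 1)"
    using \<open>m > 0\<close> \<open>g > 0\<close> by (intro mult_left_mono ln_le_minus_one) simp_all
  also have "\<dots> \<le> m * ((m\<^sup>2 - g\<^sup>2) / (2 * g\<^sup>2))"
    using \<open>m > 0\<close> \<open>g > 0\<close> by (intro mult_left_mono divide_minus_one_le_diff_squares) simp_all
  also have "\<dots> = (a - b)\<^sup>2 * (a + b) / (a * b) / 16"
    using \<open>g\<^sup>2 = a * b\<close> assms by (simp add: m_def field_simps power2_eq_square)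
  finally show ?thesis .
qed

lemma T_div_le_Psi_div:
  assumes "\<And>i. i < n \<Longrightarrow> p i > 0" and "\<And>i. i < n \<Longrightarrow> q i > 0"
  shows "T_div n p q \<le> Psi_div n p q / 16"
proof -
  have "T_div n p q \<le> (\<Sum>i<n. (p i - q i)\<^sup>2 * (p i + q i) / (p i * q i) / 16)"
    unfolding T_div_def using assms by (intro sum_mono mean_ln_mean_ratio_le) simp_all
  also have "\<dots> = Psi_div n p q / 16"
    by (simp add: Psi_div_def sum_divide_distrib)
  finally show ?thesis .
qed

theorem proposition3p5:
  fixes n :: nat and p q :: "nat \<Rightarrow> real"
  assumes "n \<ge> 2" and "p \<in> Gamma n" and "q \<in> Gamma n"
  shows "T_div n p q \<le> Psi_div n p q / 16"
  using assms(2,3) by (intro T_div_le_Psi_div) (simp_all add: Gamma_def)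

end
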